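(* Fix $v\in(0,\tfrac12)$ and consider $\alpha\in[0,1]$. For $y\in[0,1]$ let $$x^A(y)=\begin{cases}-\alpha+\sqrt{\alpha^2+y^2-2v}, & y\ge\sqrt{2v},\\ 0,& y<\sqrt{2v},\end{cases}\qquad W(y)=\int_{x^A(y)}^{y}\Big(\alpha x+v-\int_x^y\tilde x\,d\tilde x\Big)\,dx .$$ Then there exists a threshold $\alpha^P$ such that the social planner's problem $\max_{y\in[0,1]}W(y)$ is solved by $y^{P*}=\tfrac12\big(\alpha+\sqrt{\alpha^2+4v}\big)$ when $\alpha<\alpha^P$ (content moderation) and by $y^{P*}=1$ (no content moderation) when $\alpha>\alpha^P$. Moreover, with $\alpha^A,\alpha^S,y^{A*},y^{S*}$ as defined in the context, $$\alpha^P<\alpha^S<\alpha^A,$$ and whenever $\alpha<\alpha^P$, $$y^{S*}<y^{P*}<y^{A*}.$$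
   Context: Model: users are indexed by an extremeness index $x$ uniformly distributed (density 1) on $[0,1]$. A platform chooses a moderation level $y\in[0,1]$ and (with perfect technology) removes all content of users with $x>y$. A participating user $x\le y$ has utility $U(x)=\alpha x+v-\int_{\tilde x\in\hat{\mathcal X},\,x<\tilde x\le y}\tilde x\,d\tilde x$, where $\hat{\mathcal X}$ is the set of participating users; $\alpha\ge 0$ is the posting-utility parameter and $v$ the reading utility. Under this model, for a given $y$ the participating users (with no fee) form the interval $[x^A(y),y]$ with $x^A$ as in the claim, and the social welfare is $W(y)$. Advertising platform: maximizes $\zeta\,(y-x^A(y))$ over $y$ (with $\zeta>0$); define $\alpha^A:=\sqrt{2v}$ and $y^{A*}:=\sqrt{2v}$ (its optimal moderation level when $\alpha<\alpha^A$; for $\alpha\ge\alpha^A$ it chooses $y=1$). Subscription platform: chooses $y\in[0,1]$ and fee $p\ge0$ to maximize $p\,(y-x^S(y,p))$ where $x^S(y,p)=-\alpha+\sqrt{\alpha^2+y^2-2(v-p)}$ if $y^2\ge 2(v-p)$ and $x^S(y,p)=0$ otherwise. Define $\Pi(\alpha)=\max_{p\ge 0}p\big(1+\alpha-\sqrt{\alpha^2+1-2(v-p)}\big)$ and $\alpha^S:=\inf\{\alpha\ge0:\Pi(\alpha)\ge (2v/3)^{3/2}\}$; this is the threshold below which the subscription platform moderates content, choosing $y^{S*}:=\sqrt{2v/3}$ (and above which it chooses $y=1$). *)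

theory Defs
  imports "HOL-Analysis.Analysis"
begin

definition xA :: "real \<Rightarrow> real \<Rightarrow> real \<Rightarrow> real" where
  "xA v \<alpha> y = (if y \<ge> sqrt (2* v) then sqrt (\<alpha>\<^sup>2 + y\<^sup>2 - 2* v) - \<alpha> else 0)"

definition W :: "real \<Rightarrow> real \<Rightarrow> real \<Rightarrow> real" where
  "W v \<alpha> y = integral {xA v \<alpha> y..y} (\<lambda>x. \<alpha>*x + v - integral {x..y} (\<lambda>t. t))"

definition planner_solves :: "real \<Rightarrow> real \<Rightarrow> real \<Rightarrow> bool" where
  "planner_solves v \<alpha> y \<longleftrightarrow> y \<in> {0..1} \<and> (\<forall>z\<in>{0..1}. W v \<alpha> z \<le> W v \<alpha> y)"

definition yP :: "real \<Rightarrow> real \<Rightarrow> real" where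
  "yP v \<alpha> = (\<alpha> + sqrt (\<alpha>\<^sup>2 + 4* v)) / 2"

definition alphaA :: "real \<Rightarrow> real" where "alphaA v = sqrt (2* v)"
definition yA :: "real \<Rightarrow> real" where "yA v = sqrt (2* v)"
definition yS :: "real \<Rightarrow> real" where "yS v = sqrt (2* v/3)"

definition PiS :: "real \<Rightarrow> real \<Rightarrow> real" where
  "PiS v \<alpha> = (SUP p\<in>{0..}. p * (1 + \<alpha> - sqrt (\<alpha>\<^sup>2 + 1 - 2* (v - p))))"

definition alphaS :: "real \<Rightarrow> real" where
  "alphaS v = Inf {\<alpha>. \<alpha> \<ge> 0 \<and> PiS v \<alpha> \<ge> (2* v/3) powr (3/2)}"

end

theory Submission
  imports Defs
begin

text \<open>For \<open>y \<le> sqrt (2v)\<close> all users in \<open>[0, y]\<close> participate and welfare is the cubic \<open>Wfull\<close>,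
  maximised at \<open>yP\<close>. Beyond \<open>sqrt (2v)\<close> the welfare \<open>Wcut\<close> has derivative of the sign of \<open>\<alpha>y - v\<close>,
  so it is quasi-convex and the planner only compares \<open>Wfull (yP)\<close> with \<open>W 1\<close>. By an envelope
  argument their difference is nondecreasing in \<open>\<alpha>\<close>, which yields the threshold \<open>\<alpha>\<^sup>P\<close>.
  To separate \<open>\<alpha>\<^sup>P\<close> from \<open>\<alpha>\<^sup>S\<close> we exhibit a level of \<open>\<alpha>\<close>, polynomial in \<open>(2v/3)\<^sup>1\<^sup>/\<^sup>4\<close>, at
  which the welfare difference is already positive while the subscription profit of every smaller
  \<open>\<alpha>\<close> stays below \<open>(2v/3)\<^sup>3\<^sup>/\<^sup>2\<close>; with quadratic upper bounds for the two maxima involved, both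
  facts become polynomial inequalities, certified in a Bernstein basis.\<close>

definition U_primitive :: "real \<Rightarrow> real \<Rightarrow> real \<Rightarrow> real \<Rightarrow> real" where
  "U_primitive v \<alpha> y x = \<alpha> * x^2/2 + (v - y^2/2) * x + x^3/6"

lemma integral_utility:
  fixes a y \<alpha> v :: real
  assumes "a \<le> y"
  shows "integral {a..y} (\<lambda>x. \<alpha> * x + v - integral {x..y} (\<lambda>t. t))
           = U_primitive v \<alpha> y y - U_primitive v \<alpha> y a"
proof -
  have "integral {a..y} (\<lambda>x. \<alpha> * x + v - integral {x..y} (\<lambda>t. t))
          = integral {a..y} (\<lambda>x. \<alpha> * x + v - (y^2 - x^2)/2)"
    by (rule integral_cong) auto
  also have "\<dots> = U_primitive v \<alpha> y y - U_primitive v \<alpha> y a"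
  proof (rule integral_unique, rule fundamental_theorem_of_calculus[OF assms])
    fix x assume "x \<in> {a..y}"
    show "(U_primitive v \<alpha> y has_vector_derivative (\<alpha> * x + v - (y^2 - x^2)/2)) (at x within {a..y})"
      unfolding U_primitive_def[abs_def] has_real_derivative_iff_has_vector_derivative[symmetric]
      by (rule derivative_eq_intros refl | simp add: power2_eq_square field_simps)+
  qed
  finally show ?thesis .
qed

lemma xA_le:
  assumes "0 \<le> \<alpha>" "0 \<le> y" "0 < v"
  shows "xA v \<alpha> y \<le> y"
proof -
  have "sqrt (\<alpha>^2 + y^2 - 2 * v) \<le> sqrt ((y + \<alpha>)^2)"
    using assms by (simp add: power2_eq_square algebra_simps)
  then show ?thesis
    using assms unfolding xA_def by auto
qed

text \<open>The user of zero utility: the root of \<open>x\<^sup>2 + 2\<alpha>x = y\<^sup>2 - 2v\<close>.\<close>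

definition xmarg :: "real \<Rightarrow> real \<Rightarrow> real \<Rightarrow> real" where
  "xmarg v \<alpha> y = sqrt (\<alpha>^2 + y^2 - 2 * v) - \<alpha>"

lemma xA_eq_xmarg: "sqrt (2 * v) \<le> y \<Longrightarrow> xA v \<alpha> y = xmarg v \<alpha> y"
  by (simp add: xA_def xmarg_def)

lemma xmarg_root:
  assumes "0 \<le> \<alpha>^2 + y^2 - 2 * v"
  shows "(xmarg v \<alpha> y)^2 + 2 * \<alpha> * xmarg v \<alpha> y = y^2 - 2 * v"
  using assms unfolding xmarg_def by (simp add: power2_eq_square algebra_simps)

lemma radicand_nonneg: "2 * v \<le> y^2 \<Longrightarrow> 0 \<le> (\<alpha>::real)^2 + y^2 - 2 * v"
  using zero_le_power2[of \<alpha>] by linarith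

lemma xmarg_nonneg:
  assumes "0 \<le> \<alpha>" "2 * v \<le> y^2"
  shows "0 \<le> xmarg v \<alpha> y"
proof -
  have "sqrt (\<alpha>^2) \<le> sqrt (\<alpha>^2 + y^2 - 2 * v)"
    using assms(2) by (intro real_sqrt_le_mono) simp
  then show ?thesis
    using assms unfolding xmarg_def by simp
qed

lemma xmarg_sqrt_2v [simp]: "0 \<le> \<alpha> \<Longrightarrow> 0 \<le> v \<Longrightarrow> xmarg v \<alpha> (sqrt (2 * v)) = 0"
  by (simp add: xmarg_def)

definition Wfull :: "real \<Rightarrow> real \<Rightarrow> real \<Rightarrow> real" where
  "Wfull v \<alpha> y = \<alpha> * y^2/2 + v * y - y^3/3"

definition Wcut :: "real \<Rightarrow> real \<Rightarrow> real \<Rightarrow> real" where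
  "Wcut v \<alpha> y = Wfull v \<alpha> y + \<alpha> * (xmarg v \<alpha> y)^2/2 + (xmarg v \<alpha> y)^3/3"

lemma U_primitive_diag [simp]: "U_primitive v \<alpha> y y = Wfull v \<alpha> y"
  by (simp add: U_primitive_def Wfull_def power2_eq_square power3_eq_cube field_simps)

lemma U_primitive_shift:
  "U_primitive v \<alpha>' y x = U_primitive v \<alpha> y x + (\<alpha>' - \<alpha>) * x^2/2"
  by (simp add: U_primitive_def field_simps)

lemma Wfull_shift: "Wfull v \<alpha>' y = Wfull v \<alpha> y + (\<alpha>' - \<alpha>) * y^2/2"
  by (simp add: Wfull_def field_simps)

lemma Wcut_eq:
  assumes "0 \<le> \<alpha>^2 + y^2 - 2 * v"
  shows "Wcut v \<alpha> y = Wfull v \<alpha> y - U_primitive v \<alpha> y (xmarg v \<alpha> y)"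
proof -
  define a where "a = xmarg v \<alpha> y"
  have "a^2 + 2 * \<alpha> * a = y^2 - 2 * v"
    unfolding a_def using xmarg_root[OF assms] .
  moreover have "U_primitive v \<alpha> y a = - \<alpha> * a^2/2 - a^3/3 + a/2 * (a^2 + 2 * \<alpha> * a - (y^2 - 2 * v))"
    unfolding U_primitive_def by (simp add: power2_eq_square power3_eq_cube field_simps)
  ultimately show ?thesis
    unfolding Wcut_def a_def[symmetric] by simp
qed

lemma U_primitive_xmarg_le:
  assumes "0 \<le> \<alpha>" "2 * v \<le> y^2" "0 \<le> x"
  shows "U_primitive v \<alpha> y (xmarg v \<alpha> y) \<le> U_primitive v \<alpha> y x"
proof -
  define a where "a = xmarg v \<alpha> y"
  have root: "a^2 + 2 * \<alpha> * a - (y^2 - 2 * v) = 0"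
    unfolding a_def using xmarg_root[OF radicand_nonneg[OF assms(2)]] by simp
  have "0 \<le> a"
    unfolding a_def using xmarg_nonneg[OF assms(1,2)] .
  then have "0 \<le> (x - a)^2 * (3 * \<alpha> + 2 * a + x)/6"
    using assms by simp
  also have "\<dots> = U_primitive v \<alpha> y x - U_primitive v \<alpha> y a - (x - a)/2 * (a^2 + 2 * \<alpha> * a - (y^2 - 2 * v))"
    unfolding U_primitive_def by (simp add: power2_eq_square power3_eq_cube field_simps)
  finally show ?thesis
    unfolding a_def[symmetric] using root by simp
qed

lemma Wcut_ge:
  assumes "0 \<le> \<alpha>" "2 * v \<le> y^2" "0 \<le> x"
  shows "Wfull v \<alpha> y - U_primitive v \<alpha> y x \<le> Wcut v \<alpha> y"
  using Wcut_eq[OF radicand_nonneg[OF assms(2)]] U_primitive_xmarg_le[OF assms] by simp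

lemma W_eq_primitive:
  assumes "0 \<le> \<alpha>" "0 \<le> y" "0 < v"
  shows "W v \<alpha> y = Wfull v \<alpha> y - U_primitive v \<alpha> y (xA v \<alpha> y)"
  unfolding W_def using integral_utility[OF xA_le[OF assms]] by simp

lemma W_eq_Wfull:
  assumes "0 \<le> \<alpha>" "0 \<le> y" "y \<le> sqrt (2 * v)" "0 < v"
  shows "W v \<alpha> y = Wfull v \<alpha> y"
proof -
  have "xA v \<alpha> y = 0"
    using assms xmarg_sqrt_2v[of \<alpha> v] unfolding xA_def by (auto simp: xmarg_def)
  then show ?thesis
    using W_eq_primitive[OF assms(1,2,4)] by (simp add: U_primitive_def)
qed

lemma W_eq_Wcut:
  assumes "0 \<le> \<alpha>" "sqrt (2 * v) \<le> y" "0 < v"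
  shows "W v \<alpha> y = Wcut v \<alpha> y"
proof -
  have "2 * v \<le> y^2"
    using sqrt_le_D[OF assms(2)] assms(3) by simp
  then have "0 \<le> \<alpha>^2 + y^2 - 2 * v"
    by (rule radicand_nonneg)
  moreover have "0 \<le> y"
    using assms(2) real_sqrt_ge_zero[of "2 * v"] assms(3) by linarith
  ultimately show ?thesis
    using W_eq_primitive[OF assms(1) _ assms(3)] Wcut_eq xA_eq_xmarg[OF assms(2)] by simp
qed

lemma Wcut_has_derivative:
  assumes "0 < \<alpha>^2 + z^2 - 2 * v"
  shows "(Wcut v \<alpha> has_real_derivative v - z^2 + z * sqrt (\<alpha>^2 + z^2 - 2 * v)) (at z)"
proof -
  define S where "S = sqrt (\<alpha>^2 + z^2 - 2 * v)"
  have "S > 0"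
    unfolding S_def using assms by simp
  have "(xmarg v \<alpha> has_real_derivative z / S) (at z)"
    unfolding xmarg_def[abs_def] S_def using assms
    by (auto intro!: derivative_eq_intros simp: field_simps)
  then have deriv: "(Wcut v \<alpha> has_real_derivative
      \<alpha> * z + v - z^2 + \<alpha> * xmarg v \<alpha> z * (z / S) + (xmarg v \<alpha> z)^2 * (z / S)) (at z)"
    unfolding Wcut_def[abs_def] Wfull_def
    by (auto intro!: derivative_eq_intros simp: power2_eq_square field_simps)
  have eq: "\<alpha> * z + v - z^2 + \<alpha> * xmarg v \<alpha> z * (z / S) + (xmarg v \<alpha> z)^2 * (z / S)
                   = v - z^2 + z * S"
    using \<open>S > 0\<close> unfolding xmarg_def S_def[symmetric] by (simp add: field_simps power2_eq_square)
  show ?thesis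
    using deriv[unfolded eq] unfolding S_def .
qed

text \<open>Multiplying \<open>D\<close> by its positive conjugate \<open>z sqrt (\<alpha>\<^sup>2 + z\<^sup>2 - 2v) + z\<^sup>2 - v\<close> leaves
  \<open>(\<alpha>z - v)(\<alpha>z + v)\<close>.\<close>

lemma Wcut_derivative_sign:
  assumes "0 < z" "2 * v \<le> z^2" "0 < v" "0 \<le> \<alpha>"
  defines "D \<equiv> v - z^2 + z * sqrt (\<alpha>^2 + z^2 - 2 * v)"
  shows "0 \<le> D \<longleftrightarrow> v \<le> \<alpha> * z" and "D \<le> 0 \<longleftrightarrow> \<alpha> * z \<le> v"
proof -
  define S where "S = sqrt (\<alpha>^2 + z^2 - 2 * v)"
  have S2: "S^2 = \<alpha>^2 + z^2 - 2 * v"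
    unfolding S_def using radicand_nonneg[OF assms(2)] by simp
  have "D * (z * S + z^2 - v) = z^2 * S^2 - (z^2 - v)^2"
    unfolding D_def S_def[symmetric] by (simp add: power2_eq_square algebra_simps)
  also have "\<dots> = (\<alpha> * z - v) * (\<alpha> * z + v)"
    unfolding S2 by (simp add: power2_eq_square algebra_simps)
  finally have prod: "D * (z * S + z^2 - v) = (\<alpha> * z - v) * (\<alpha> * z + v)" .
  have "0 \<le> z * S"
    using assms(1) radicand_nonneg[OF assms(2)] unfolding S_def by simp
  then have P: "0 < z * S + z^2 - v"
    using assms(2,3) by linarith
  have Q: "0 < \<alpha> * z + v"
    using assms(1,3,4) by (simp add: add_nonneg_pos)
  have "0 \<le> D \<longleftrightarrow> 0 \<le> (\<alpha> * z - v) * (\<alpha> * z + v)"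
    unfolding prod[symmetric] using P by (simp add: zero_le_mult_iff)
  then show "0 \<le> D \<longleftrightarrow> v \<le> \<alpha> * z"
    using Q by (simp add: zero_le_mult_iff)
  have "D \<le> 0 \<longleftrightarrow> (\<alpha> * z - v) * (\<alpha> * z + v) \<le> 0"
    unfolding prod[symmetric] using P by (simp add: mult_le_0_iff)
  then show "D \<le> 0 \<longleftrightarrow> \<alpha> * z \<le> v"
    using Q by (simp add: mult_le_0_iff)
qed

lemma Wcut_continuous: "continuous_on A (Wcut v \<alpha>)"
  unfolding Wcut_def[abs_def] Wfull_def xmarg_def by (intro continuous_intros) auto

lemma above_sqrt_2v:
  assumes "0 < v" "sqrt (2 * v) < x"
  shows "0 < x" "2 * v < x^2"
proof -
  show "0 < x"
    using assms real_sqrt_gt_zero[of "2 * v"] by linarith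
  have "sqrt (2 * v) < sqrt (x^2)"
    using assms(2) \<open>0 < x\<close> by simp
  then show "2 * v < x^2"
    by (simp only: real_sqrt_less_iff)
qed

lemma Wcut_increasing:
  assumes "sqrt (2 * v) \<le> z1" "z1 \<le> z2" "v \<le> \<alpha> * z1" "0 \<le> \<alpha>" "0 < v"
  shows "Wcut v \<alpha> z1 \<le> Wcut v \<alpha> z2"
proof (rule DERIV_nonneg_imp_increasing_open[OF assms(2) _ Wcut_continuous])
  fix x assume x: "z1 < x" "x < z2"
  then have "0 < x" "2 * v < x^2"
    using above_sqrt_2v[OF assms(5)] assms(1) by auto
  moreover have "\<alpha> * z1 \<le> \<alpha> * x"
    using x assms by (intro mult_left_mono) auto
  ultimately have "0 \<le> v - x^2 + x * sqrt (\<alpha>^2 + x^2 - 2 * v)"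
    using Wcut_derivative_sign(1)[of x v \<alpha>] assms by auto
  moreover have "0 < \<alpha>^2 + x^2 - 2 * v"
    using \<open>2 * v < x^2\<close> zero_le_power2[of \<alpha>] by linarith
  ultimately show "\<exists>D. (Wcut v \<alpha> has_real_derivative D) (at x) \<and> 0 \<le> D"
    using Wcut_has_derivative by blast
qed

lemma Wcut_decreasing:
  assumes "sqrt (2 * v) \<le> z1" "z1 \<le> z2" "\<alpha> * z2 \<le> v" "0 \<le> \<alpha>" "0 < v"
  shows "Wcut v \<alpha> z2 \<le> Wcut v \<alpha> z1"
proof (rule DERIV_nonpos_imp_decreasing_open[OF assms(2) _ Wcut_continuous])
  fix x assume x: "z1 < x" "x < z2"
  then have "0 < x" "2 * v < x^2"
    using above_sqrt_2v[OF assms(5)] assms(1) by auto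
  moreover have "\<alpha> * x \<le> \<alpha> * z2"
    using x assms by (intro mult_left_mono) auto
  ultimately have "v - x^2 + x * sqrt (\<alpha>^2 + x^2 - 2 * v) \<le> 0"
    using Wcut_derivative_sign(2)[of x v \<alpha>] assms by auto
  moreover have "0 < \<alpha>^2 + x^2 - 2 * v"
    using \<open>2 * v < x^2\<close> zero_le_power2[of \<alpha>] by linarith
  ultimately show "\<exists>D. (Wcut v \<alpha> has_real_derivative D) (at x) \<and> D \<le> 0"
    using Wcut_has_derivative by blast
qed

lemma Wcut_sqrt_2v: "0 \<le> \<alpha> \<Longrightarrow> 0 \<le> v \<Longrightarrow> Wcut v \<alpha> (sqrt (2 * v)) = Wfull v \<alpha> (sqrt (2 * v))"
  by (simp add: Wcut_def)

lemma yP_sq: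
  assumes "0 < v"
  shows "(yP v \<alpha>)^2 = \<alpha> * yP v \<alpha> + v"
proof -
  have "(sqrt (\<alpha>^2 + 4 * v))^2 = \<alpha>^2 + 4 * v"
    using assms by (simp add: add_nonneg_nonneg)
  then show ?thesis
    unfolding yP_def by (simp add: power2_eq_square field_simps)
qed

lemma alpha_less_yP:
  assumes "0 \<le> \<alpha>" "0 < v"
  shows "\<alpha> < yP v \<alpha>"
proof -
  have "sqrt (\<alpha>^2) < sqrt (\<alpha>^2 + 4 * v)"
    using assms by (intro real_sqrt_less_mono) simp
  then show ?thesis
    using assms unfolding yP_def by simp
qed

lemma yP_le_iff:
  assumes "0 \<le> \<alpha>" "0 < v" "0 \<le> Y"
  shows "yP v \<alpha> \<le> Y \<longleftrightarrow> v \<le> Y^2 - \<alpha> * Y" and "yP v \<alpha> < Y \<longleftrightarrow> v < Y^2 - \<alpha> * Y"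
proof -
  define p where "p = yP v \<alpha>"
  define K where "K = Y + p - \<alpha>"
  have eq: "Y^2 - \<alpha> * Y - v = (Y - p) * K"
    using yP_sq[OF assms(2), of \<alpha>] unfolding p_def[symmetric] K_def
    by (simp add: power2_eq_square algebra_simps)
  have "0 < K"
    using alpha_less_yP[OF assms(1,2)] assms(3) unfolding p_def K_def by linarith
  have "v \<le> Y^2 - \<alpha> * Y \<longleftrightarrow> 0 \<le> (Y - p) * K" and "v < Y^2 - \<alpha> * Y \<longleftrightarrow> 0 < (Y - p) * K"
    using eq by linarith+
  then show "p \<le> Y \<longleftrightarrow> v \<le> Y^2 - \<alpha> * Y" and "p < Y \<longleftrightarrow> v < Y^2 - \<alpha> * Y"
    using \<open>0 < K\<close> by (simp_all add: zero_le_mult_iff zero_less_mult_iff)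
qed

lemma Wfull_le_yP:
  assumes "0 \<le> \<alpha>" "0 < v" "0 \<le> z"
  shows "Wfull v \<alpha> z \<le> Wfull v \<alpha> (yP v \<alpha>)"
proof -
  define p where "p = yP v \<alpha>"
  have "0 \<le> (z - p)^2 * (2 * p/3 + z/3 - \<alpha>/2)"
    using alpha_less_yP[OF assms(1,2)] assms unfolding p_def by simp
  also have "\<dots> = Wfull v \<alpha> p - Wfull v \<alpha> z + (p - z) * (p^2 - \<alpha> * p - v)"
    unfolding Wfull_def by (simp add: power2_eq_square power3_eq_cube field_simps)
  finally show ?thesis
    using yP_sq[OF assms(2), of \<alpha>] unfolding p_def by simp
qed

lemma Wfull_mono:
  assumes "0 \<le> \<alpha>" "0 < v" "0 \<le> z" "z \<le> b" "b \<le> yP v \<alpha>"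
  shows "Wfull v \<alpha> z \<le> Wfull v \<alpha> b"
proof -
  have "0 \<le> v + \<alpha> * z - z^2" "0 \<le> v + \<alpha> * b - b^2"
    using yP_le_iff(2)[of \<alpha> v z] yP_le_iff(2)[of \<alpha> v b] assms by auto
  then have "0 \<le> (b - z) * ((v + \<alpha> * z - z^2)/2 + (v + \<alpha> * b - b^2)/2 + (b - z)^2/6)"
    using assms by (intro mult_nonneg_nonneg add_nonneg_nonneg) auto
  also have "\<dots> = Wfull v \<alpha> b - Wfull v \<alpha> z"
    unfolding Wfull_def by (simp add: power2_eq_square power3_eq_cube field_simps)
  finally show ?thesis
    by simp
qed

lemma sqrt_half_times_sqrt_double: "0 \<le> v \<Longrightarrow> sqrt (v/2) * sqrt (2 * v) = v"
  by (simp add: real_sqrt_mult[symmetric])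

lemma yP_le_sqrt_2v_iff:
  assumes "0 \<le> \<alpha>" "0 < v"
  shows "yP v \<alpha> \<le> sqrt (2 * v) \<longleftrightarrow> \<alpha> \<le> sqrt (v/2)"
    and "yP v \<alpha> < sqrt (2 * v) \<longleftrightarrow> \<alpha> < sqrt (v/2)"
proof -
  have q: "0 < sqrt (2 * v)"
    using assms by simp
  have "\<alpha> \<le> sqrt (v/2) \<longleftrightarrow> \<alpha> * sqrt (2 * v) \<le> v" and "\<alpha> < sqrt (v/2) \<longleftrightarrow> \<alpha> * sqrt (2 * v) < v"
    using mult_le_cancel_right_pos[OF q, of \<alpha> "sqrt (v/2)"] mult_less_cancel_right_pos[OF q, of \<alpha> "sqrt (v/2)"]
      sqrt_half_times_sqrt_double[of v] assms by simp_all
  moreover have "(sqrt (2 * v))^2 = 2 * v"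
    using assms by simp
  ultimately show "yP v \<alpha> \<le> sqrt (2 * v) \<longleftrightarrow> \<alpha> \<le> sqrt (v/2)"
    and "yP v \<alpha> < sqrt (2 * v) \<longleftrightarrow> \<alpha> < sqrt (v/2)"
    using yP_le_iff[of \<alpha> v "sqrt (2 * v)"] assms by auto
qed

lemma yS_less_yP:
  assumes "0 \<le> \<alpha>" "0 < v"
  shows "yS v < yP v \<alpha>"
proof -
  have "(sqrt (2 * v/3))^2 = 2 * v/3" and "0 \<le> \<alpha> * sqrt (2 * v/3)"
    using assms by simp_all
  then have "(sqrt (2 * v/3))^2 - \<alpha> * sqrt (2 * v/3) < v"
    using assms by linarith
  then show ?thesis
    using yP_le_iff(1)[of \<alpha> v "sqrt (2 * v/3)"] assms unfolding yS_def by auto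
qed

lemma yP_less_yA:
  assumes "0 \<le> \<alpha>" "0 < v" "\<alpha> < sqrt (v/2)"
  shows "yP v \<alpha> < yA v"
  using yP_le_sqrt_2v_iff(2)[OF assms(1,2)] assms(3) unfolding yA_def by simp

definition welfare_gap :: "real \<Rightarrow> real \<Rightarrow> real" where
  "welfare_gap v \<alpha> = Wcut v \<alpha> 1 - Wfull v \<alpha> (yP v \<alpha>)"

lemma xmarg_1_bounds:
  assumes "0 \<le> \<alpha>" "v < 1/2"
  shows "0 \<le> xmarg v \<alpha> 1" "(xmarg v \<alpha> 1)^2 \<le> 1 - 2 * v"
proof -
  have one: "2 * v \<le> 1^2"
    using assms by simp
  show "0 \<le> xmarg v \<alpha> 1"
    using xmarg_nonneg[OF assms(1) one] .
  then have "0 \<le> 2 * \<alpha> * xmarg v \<alpha> 1"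
    using assms(1) by simp
  then show "(xmarg v \<alpha> 1)^2 \<le> 1 - 2 * v"
    using xmarg_root[OF radicand_nonneg[OF one], of \<alpha>] by simp
qed

lemma Wcut_1_eq:
  assumes "v < 1/2"
  shows "Wcut v \<alpha> 1 = Wfull v \<alpha> 1 - U_primitive v \<alpha> 1 (xmarg v \<alpha> 1)"
  using Wcut_eq[OF radicand_nonneg[of v 1]] assms by simp

lemma Wcut_1_ge:
  assumes "0 \<le> \<alpha>" "v < 1/2" "0 \<le> x"
  shows "Wfull v \<alpha> 1 - U_primitive v \<alpha> 1 x \<le> Wcut v \<alpha> 1"
  using Wcut_ge[OF assms(1) _ assms(3), of v] assms(2) by simp

text \<open>Both terms of the gap are maxima of functions affine in \<open>\<alpha>\<close>, with slopes \<open>(1 - a\<^sup>2)/2\<close>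
  and \<open>p\<^sup>2/2\<close> at the maximisers \<open>a\<close> and \<open>p\<close>; this bounds how fast the gap can change.\<close>

lemma welfare_gap_mono:
  assumes "0 \<le> \<alpha>1" "\<alpha>1 \<le> \<alpha>2" "\<alpha>2 \<le> sqrt (v/2)" "0 < v" "v < 1/2"
  shows "welfare_gap v \<alpha>1 \<le> welfare_gap v \<alpha>2"
proof -
  define a where "a = xmarg v \<alpha>1 1"
  define p where "p = yP v \<alpha>2"
  have "0 \<le> \<alpha>2"
    using assms by linarith
  have a: "0 \<le> a" "a^2 \<le> 1 - 2 * v"
    unfolding a_def using xmarg_1_bounds[OF assms(1,5)] by auto
  have "0 \<le> p" "p \<le> sqrt (2 * v)"
    unfolding p_def using alpha_less_yP[OF \<open>0 \<le> \<alpha>2\<close> assms(4)] yP_le_sqrt_2v_iff(1)[OF \<open>0 \<le> \<alpha>2\<close> assms(4)] assms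
    by auto
  then have "p^2 \<le> 2 * v"
    using power_mono[of p "sqrt (2 * v)" 2] assms(4) by simp
  have "welfare_gap v \<alpha>1 = Wfull v \<alpha>1 1 - U_primitive v \<alpha>1 1 a - Wfull v \<alpha>1 (yP v \<alpha>1)"
    unfolding welfare_gap_def a_def using Wcut_1_eq[OF assms(5)] by simp
  also have "\<dots> \<le> Wfull v \<alpha>1 1 - U_primitive v \<alpha>1 1 a - Wfull v \<alpha>1 p"
    using Wfull_le_yP[OF assms(1,4) \<open>0 \<le> p\<close>] by simp
  also have "\<dots> = Wfull v \<alpha>2 1 - U_primitive v \<alpha>2 1 a - Wfull v \<alpha>2 p - (\<alpha>2 - \<alpha>1) * (1 - a^2 - p^2)/2"
    by (simp add: Wfull_shift[of v \<alpha>2 1 \<alpha>1] Wfull_shift[of v \<alpha>2 p \<alpha>1]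
        U_primitive_shift[of v \<alpha>2 1 a \<alpha>1] field_simps)
  also have "\<dots> \<le> Wcut v \<alpha>2 1 - Wfull v \<alpha>2 p"
  proof -
    have "0 \<le> (\<alpha>2 - \<alpha>1) * (1 - a^2 - p^2)"
      using a(2) \<open>p^2 \<le> 2 * v\<close> assms(2) by simp
    then show ?thesis
      using Wcut_1_ge[OF \<open>0 \<le> \<alpha>2\<close> assms(5) a(1)] by simp
  qed
  finally show ?thesis
    unfolding welfare_gap_def p_def .
qed

lemma welfare_gap_lower_lipschitz:
  assumes "0 \<le> \<alpha>1" "\<alpha>1 \<le> \<alpha>2" "0 < v" "v < 1/2"
  shows "welfare_gap v \<alpha>2 - (\<alpha>2 - \<alpha>1)/2 \<le> welfare_gap v \<alpha>1"
proof -
  define a where "a = xmarg v \<alpha>2 1"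
  define p where "p = yP v \<alpha>1"
  have "0 \<le> \<alpha>2"
    using assms by linarith
  have "0 \<le> a"
    unfolding a_def using xmarg_1_bounds[OF \<open>0 \<le> \<alpha>2\<close> assms(4)] by auto
  have "0 \<le> p"
    unfolding p_def using alpha_less_yP[OF assms(1,3)] assms(1) by linarith
  have "welfare_gap v \<alpha>2 = Wfull v \<alpha>2 1 - U_primitive v \<alpha>2 1 a - Wfull v \<alpha>2 (yP v \<alpha>2)"
    unfolding welfare_gap_def a_def using Wcut_1_eq[OF assms(4)] by simp
  also have "\<dots> \<le> Wfull v \<alpha>2 1 - U_primitive v \<alpha>2 1 a - Wfull v \<alpha>2 p"
    using Wfull_le_yP[OF \<open>0 \<le> \<alpha>2\<close> assms(3) \<open>0 \<le> p\<close>] by simp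
  also have "\<dots> = Wfull v \<alpha>1 1 - U_primitive v \<alpha>1 1 a - Wfull v \<alpha>1 p + (\<alpha>2 - \<alpha>1) * (1 - a^2 - p^2)/2"
    by (simp add: Wfull_shift[of v \<alpha>2 1 \<alpha>1] Wfull_shift[of v \<alpha>2 p \<alpha>1]
        U_primitive_shift[of v \<alpha>2 1 a \<alpha>1] field_simps)
  also have "\<dots> \<le> Wcut v \<alpha>1 1 - Wfull v \<alpha>1 p + (\<alpha>2 - \<alpha>1)/2"
  proof -
    have "(\<alpha>2 - \<alpha>1) * (1 - a^2 - p^2) \<le> (\<alpha>2 - \<alpha>1) * 1"
      using assms(2) by (intro mult_left_mono) auto
    then show ?thesis
      using Wcut_1_ge[OF assms(1,4) \<open>0 \<le> a\<close>] by linarith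
  qed
  finally show ?thesis
    unfolding welfare_gap_def p_def by simp
qed

lemma welfare_gap_nonneg_below:
  assumes "0 < v" "v < 1/2" "0 < c" "0 < welfare_gap v c"
  obtains c' where "0 \<le> c'" "c' < c" "0 \<le> welfare_gap v c'"
proof
  define c' where "c' = c - min c (welfare_gap v c) / 2"
  show "0 \<le> c'" "c' < c"
    unfolding c'_def using assms by auto
  then show "0 \<le> welfare_gap v c'"
    using welfare_gap_lower_lipschitz[of c' c v] assms unfolding c'_def by auto
qed

lemma W_le_max:
  assumes "0 < v" "v < 1/2" "0 \<le> \<alpha>" "0 \<le> z" "z \<le> 1"
  shows "W v \<alpha> z \<le> max (Wfull v \<alpha> (yP v \<alpha>)) (Wcut v \<alpha> 1)"
proof (cases "z \<le> sqrt (2 * v)")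
  case True
  then show ?thesis
    using W_eq_Wfull[OF assms(3,4) True assms(1)] Wfull_le_yP[OF assms(3,1,4)] by simp
next
  case False
  then have "sqrt (2 * v) \<le> z"
    by simp
  show ?thesis
  proof (cases "\<alpha> * z \<le> v")
    case True
    have "Wcut v \<alpha> z \<le> Wfull v \<alpha> (sqrt (2 * v))"
      using Wcut_decreasing[OF order_refl \<open>sqrt (2 * v) \<le> z\<close> True assms(3,1)] Wcut_sqrt_2v assms by simp
    also have "\<dots> \<le> Wfull v \<alpha> (yP v \<alpha>)"
      using Wfull_le_yP[OF assms(3,1), of "sqrt (2 * v)"] assms(1) by simp
    finally show ?thesis
      using W_eq_Wcut[OF assms(3) \<open>sqrt (2 * v) \<le> z\<close> assms(1)] by simp
  next
    case False
    then have "Wcut v \<alpha> z \<le> Wcut v \<alpha> 1"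
      using Wcut_increasing[OF \<open>sqrt (2 * v) \<le> z\<close> assms(5) _ assms(3,1)] by simp
    then show ?thesis
      using W_eq_Wcut[OF assms(3) \<open>sqrt (2 * v) \<le> z\<close> assms(1)] by simp
  qed
qed

lemma sqrt_2v_le_1: "v < 1/2 \<Longrightarrow> sqrt (2 * v) \<le> 1"
  by simp

lemma planner_solves_yP:
  assumes "0 < v" "v < 1/2" "0 \<le> \<alpha>" "\<alpha> < sqrt (v/2)" "welfare_gap v \<alpha> \<le> 0"
  shows "planner_solves v \<alpha> (yP v \<alpha>)"
proof -
  have "0 \<le> yP v \<alpha>" "yP v \<alpha> < sqrt (2 * v)"
    using alpha_less_yP[OF assms(3,1)] yP_le_sqrt_2v_iff(2)[OF assms(3,1)] assms by auto
  moreover have "yP v \<alpha> \<le> 1"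
    using calculation sqrt_2v_le_1[OF assms(2)] by linarith
  ultimately have "W v \<alpha> (yP v \<alpha>) = Wfull v \<alpha> (yP v \<alpha>)" "yP v \<alpha> \<le> 1"
    using W_eq_Wfull[OF assms(3) _ _ assms(1)] by auto
  moreover have "Wcut v \<alpha> 1 \<le> Wfull v \<alpha> (yP v \<alpha>)"
    using assms(5) unfolding welfare_gap_def by simp
  ultimately show ?thesis
    unfolding planner_solves_def using W_le_max[OF assms(1-3)] \<open>0 \<le> yP v \<alpha>\<close> by fastforce
qed

lemma planner_solves_1_of_gap:
  assumes "0 < v" "v < 1/2" "0 \<le> \<alpha>" "0 \<le> welfare_gap v \<alpha>"
  shows "planner_solves v \<alpha> 1"
proof -
  have "W v \<alpha> 1 = Wcut v \<alpha> 1"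
    using W_eq_Wcut[OF assms(3) sqrt_2v_le_1[OF assms(2)] assms(1)] .
  moreover have "Wfull v \<alpha> (yP v \<alpha>) \<le> Wcut v \<alpha> 1"
    using assms(4) unfolding welfare_gap_def by simp
  ultimately show ?thesis
    unfolding planner_solves_def using W_le_max[OF assms(1-3)] by fastforce
qed

lemma planner_solves_1_of_large:
  assumes "0 < v" "v < 1/2" "0 \<le> \<alpha>" "sqrt (v/2) \<le> \<alpha>"
  shows "planner_solves v \<alpha> 1"
proof -
  have "v \<le> \<alpha> * sqrt (2 * v)"
    using yP_le_sqrt_2v_iff(2)[OF assms(3,1)] yP_le_iff(2)[OF assms(3,1), of "sqrt (2 * v)"] assms
    by auto
  have "W v \<alpha> z \<le> W v \<alpha> 1" if "0 \<le> z" "z \<le> 1" for z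
  proof (cases "z \<le> sqrt (2 * v)")
    case True
    have "W v \<alpha> z = Wfull v \<alpha> z"
      using W_eq_Wfull[OF assms(3) that(1) True assms(1)] .
    also have "\<dots> \<le> Wfull v \<alpha> (sqrt (2 * v))"
      using Wfull_mono[OF assms(3,1) that(1) True] yP_le_sqrt_2v_iff(2)[OF assms(3,1)] assms(4) by simp
    also have "\<dots> \<le> Wcut v \<alpha> 1"
      using Wcut_increasing[OF order_refl sqrt_2v_le_1[OF assms(2)] \<open>v \<le> _\<close> assms(3,1)]
        Wcut_sqrt_2v assms by simp
    finally show ?thesis
      using W_eq_Wcut[OF assms(3) sqrt_2v_le_1[OF assms(2)] assms(1)] by simp
  next
    case False
    then have "sqrt (2 * v) \<le> z"
      by simp
    moreover have "\<alpha> * sqrt (2 * v) \<le> \<alpha> * z"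
      using \<open>sqrt (2 * v) \<le> z\<close> assms(3) by (intro mult_left_mono)
    ultimately show ?thesis
      using Wcut_increasing[OF _ that(2) _ assms(3,1)] \<open>v \<le> _\<close>
        W_eq_Wcut[OF assms(3) _ assms(1)] sqrt_2v_le_1[OF assms(2)] by simp
  qed
  then show ?thesis
    unfolding planner_solves_def by auto
qed

lemma planner_threshold:
  assumes "0 < v" "v < 1/2" "0 < c" "c < sqrt (v/2)" "0 < welfare_gap v c"
  obtains \<alpha>P where "\<alpha>P < c"
    "\<And>\<alpha>. 0 \<le> \<alpha> \<Longrightarrow> \<alpha> < \<alpha>P \<Longrightarrow> planner_solves v \<alpha> (yP v \<alpha>)"
    "\<And>\<alpha>. 0 \<le> \<alpha> \<Longrightarrow> \<alpha>P < \<alpha> \<Longrightarrow> planner_solves v \<alpha> 1"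
proof
  define P where "P = {\<alpha>. 0 \<le> \<alpha> \<and> \<alpha> \<le> sqrt (v/2) \<and> 0 \<le> welfare_gap v \<alpha>}"
  obtain c' where "0 \<le> c'" "c' < c" "0 \<le> welfare_gap v c'"
    using welfare_gap_nonneg_below[OF assms(1,2,3,5)] .
  then have "c' \<in> P"
    unfolding P_def using assms(4) by auto
  have "bdd_below P"
    unfolding P_def by (auto intro: bdd_belowI)
  then show "Inf P < c"
    using cInf_lower[OF \<open>c' \<in> P\<close>] \<open>c' < c\<close> by linarith
  show "planner_solves v \<alpha> (yP v \<alpha>)" if \<alpha>: "0 \<le> \<alpha>" "\<alpha> < Inf P" for \<alpha>
  proof (rule planner_solves_yP[OF assms(1,2) \<alpha>(1)])
    show "\<alpha> < sqrt (v/2)"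
      using \<alpha> \<open>Inf P < c\<close> assms(4) by linarith
    then show "welfare_gap v \<alpha> \<le> 0"
      using cInf_lower[OF _ \<open>bdd_below P\<close>, of \<alpha>] \<alpha> unfolding P_def by force
  qed
  show "planner_solves v \<alpha> 1" if \<alpha>: "0 \<le> \<alpha>" "Inf P < \<alpha>" for \<alpha>
  proof (cases "sqrt (v/2) \<le> \<alpha>")
    case True
    then show ?thesis
      using planner_solves_1_of_large[OF assms(1,2) \<alpha>(1)] by simp
  next
    case False
    obtain x where "x \<in> P" "x < \<alpha>"
      using cInf_lessD[of P \<alpha>] \<open>c' \<in> P\<close> \<alpha>(2) by blast
    then have "0 \<le> welfare_gap v \<alpha>"
      using welfare_gap_mono[of x \<alpha> v] False assms(1,2) unfolding P_def by force
    then show ?thesis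
      using planner_solves_1_of_gap[OF assms(1,2) \<alpha>(1)] by simp
  qed
qed

definition profit :: "real \<Rightarrow> real \<Rightarrow> real \<Rightarrow> real" where
  "profit v \<alpha> p = p * (1 + \<alpha> - sqrt (\<alpha>^2 + 1 - 2 * (v - p)))"

lemma PiS_eq_SUP_profit: "PiS v \<alpha> = (SUP p\<in>{0..}. profit v \<alpha> p)"
  unfolding PiS_def profit_def ..

text \<open>The profit \<open>p t\<close> at \<open>y = 1\<close> as a function of the market share \<open>t = 1 - x\<^sup>S(1, p)\<close>,
  which the fee \<open>p = \<alpha> + v - (1 + \<alpha>) t + t\<^sup>2/2\<close> achieves.\<close>

definition profit_share :: "real \<Rightarrow> real \<Rightarrow> real \<Rightarrow> real" where
  "profit_share v \<alpha> t = (\<alpha> + v) * t - (1 + \<alpha>) * t^2 + t^3/2"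

definition profit_share' :: "real \<Rightarrow> real \<Rightarrow> real \<Rightarrow> real" where
  "profit_share' v \<alpha> t = \<alpha> + v - 2 * (1 + \<alpha>) * t + 3/2 * t^2"

lemma profit_eq_profit_share:
  assumes "0 \<le> \<alpha>" "v < 1/2" "0 \<le> p"
  obtains t where "t \<le> 1" "profit v \<alpha> p = p * t" "profit v \<alpha> p = profit_share v \<alpha> t"
proof
  define S where "S = sqrt (\<alpha>^2 + 1 - 2 * (v - p))"
  have "2 * (v - p) < 1"
    using assms(2,3) by simp
  then have "0 \<le> \<alpha>^2 + 1 - 2 * (v - p)"
    using zero_le_power2[of \<alpha>] by linarith
  then have S2: "S^2 = \<alpha>^2 + 1 - 2 * (v - p)"
    unfolding S_def by simp
  have "sqrt (\<alpha>^2) \<le> S"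
    unfolding S_def using assms by (intro real_sqrt_le_mono) simp
  then show "1 + \<alpha> - S \<le> 1"
    using assms by simp
  show profit: "profit v \<alpha> p = p * (1 + \<alpha> - S)"
    unfolding profit_def S_def ..
  have "p = \<alpha> + v - (1 + \<alpha>) * (1 + \<alpha> - S) + (1 + \<alpha> - S)^2/2"
    using S2 by (simp add: power2_eq_square field_simps)
  moreover have "profit_share v \<alpha> t = (\<alpha> + v - (1 + \<alpha>) * t + t^2/2) * t" for t
    unfolding profit_share_def by (simp add: power2_eq_square power3_eq_cube algebra_simps)
  ultimately show "profit v \<alpha> p = profit_share v \<alpha> (1 + \<alpha> - S)"
    unfolding profit by simp
qed

lemma linear_minus_square_le:
  fixes a d K :: real
  assumes "0 < K"
  shows "a * d - K * d^2/2 \<le> a^2 / (2 * K)"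
proof -
  have "0 \<le> (K * d - a)^2 / (2 * K)"
    using assms by simp
  also have "\<dots> = a^2 / (2 * K) - (a * d - K * d^2/2)"
    using assms by (simp add: field_simps power2_eq_square)
  finally show ?thesis
    by simp
qed

lemma profit_share_le:
  assumes "t \<le> 1" "0 < 1 + 2 * c - 2 * t0"
  shows "profit_share v c t
           \<le> profit_share v c t0 + (profit_share' v c t0)^2 / (2 * (1 + 2 * c - 2 * t0))"
proof -
  define M where "M = 1 + 2 * c - 2 * t0"
  have "profit_share v c t
          = profit_share v c t0 + (profit_share' v c t0 * (t - t0) - M * (t - t0)^2/2)
            + (t - t0)^2 * (t - 1)/2"
    unfolding profit_share_def profit_share'_def M_def
    by (simp add: field_simps power2_eq_square power3_eq_cube)
  moreover have "(t - t0)^2 * (t - 1)/2 \<le> 0"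
    using assms(1) by (simp add: mult_nonneg_nonpos)
  moreover have "profit_share' v c t0 * (t - t0) - M * (t - t0)^2/2 \<le> (profit_share' v c t0)^2 / (2 * M)"
    using linear_minus_square_le[of M "profit_share' v c t0" "t - t0"] assms(2) unfolding M_def by simp
  ultimately show ?thesis
    unfolding M_def by linarith
qed

lemma profit_share_mono_alpha:
  assumes "0 \<le> t" "t \<le> 1" "\<alpha> \<le> c"
  shows "profit_share v \<alpha> t \<le> profit_share v c t"
proof -
  have "0 \<le> (c - \<alpha>) * (t * (1 - t))"
    using assms by simp
  also have "\<dots> = profit_share v c t - profit_share v \<alpha> t"
    unfolding profit_share_def by (simp add: field_simps power2_eq_square)
  finally show ?thesis
    by simp
qed

lemma profit_le:
  assumes "0 \<le> \<alpha>" "\<alpha> \<le> c" "v < 1/2" "0 \<le> p" "0 < 1 + 2 * c - 2 * t0"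
  shows "profit v \<alpha> p \<le> profit_share v c t0 + (profit_share' v c t0)^2 / (2 * (1 + 2 * c - 2 * t0))"
    (is "_ \<le> ?B")
proof -
  obtain t where t: "t \<le> 1" "profit v \<alpha> p = p * t" "profit v \<alpha> p = profit_share v \<alpha> t"
    using profit_eq_profit_share[OF assms(1,3,4)] .
  show ?thesis
  proof (cases "t \<le> 0")
    case True
    have "p * t \<le> 0"
      using True assms(4) by (simp add: mult_nonneg_nonpos)
    moreover have "0 \<le> ?B"
      using profit_share_le[of 0 c t0 v] assms(5) by (simp add: profit_share_def)
    ultimately show ?thesis
      using t(2) by linarith
  next
    case False
    then show ?thesis
      using t profit_share_mono_alpha[of t \<alpha> c v] assms(2) profit_share_le[OF t(1) assms(5), of v]
      by simp
  qed
qed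

lemma profit_le_PiS:
  assumes "0 \<le> \<alpha>" "v < 1/2" "0 \<le> p"
  shows "profit v \<alpha> p \<le> PiS v \<alpha>"
  unfolding PiS_eq_SUP_profit
proof (rule cSUP_upper)
  show "p \<in> {0..}"
    using assms by simp
  have "0 < 1 + 2 * \<alpha> - 2 * 0"
    using assms by simp
  then show "bdd_above (profit v \<alpha> ` {0..})"
    using profit_le[OF assms(1) order_refl assms(2) _ \<open>0 < 1 + 2 * \<alpha> - 2 * 0\<close>] by (intro bdd_aboveI2) auto
qed

lemma PiS_less:
  assumes "0 \<le> \<alpha>" "\<alpha> \<le> c" "v < 1/2" "0 < 1 + 2 * c - 2 * t0"
    and "0 < 2 * (1 + 2 * c - 2 * t0) * (T - profit_share v c t0) - (profit_share' v c t0)^2"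
  shows "PiS v \<alpha> < T"
proof -
  define M where "M = 1 + 2 * c - 2 * t0"
  have "PiS v \<alpha> \<le> profit_share v c t0 + (profit_share' v c t0)^2 / (2 * M)"
    unfolding PiS_eq_SUP_profit M_def
    by (rule cSUP_least) (use profit_le[OF assms(1-3) _ assms(4)] in auto)
  also have "\<dots> < T"
    using assms(4,5) unfolding M_def[symmetric] by (simp add: field_simps)
  finally show ?thesis .
qed

lemma powr_three_halves:
  fixes x :: real
  assumes "0 \<le> x"
  shows "x powr (3/2) = x * sqrt x"
proof -
  have "x powr (3/2) = sqrt (x^2 * x)"
    using powr_half_sqrt_powr[of x 3] assms by (simp add: power3_eq_cube power2_eq_square)
  also have "\<dots> = x * sqrt x"
    using assms by (simp add: real_sqrt_mult)
  finally show ?thesis .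
qed

text \<open>Witness: the fee \<open>p = v\<close>, using \<open>sqrt (1 + a\<^sup>2) \<le> 1 + a\<^sup>2/2\<close> and \<open>sqrt 3 \<ge> 17/10\<close>.\<close>

lemma PiS_three_fifths_ge:
  assumes "0 < v" "v < 1/2"
  shows "(2 * v/3) powr (3/2) \<le> PiS v (3/5 * sqrt (2 * v))"
proof -
  define q where "q = sqrt (2 * v)"
  define a where "a = 3/5 * q"
  have "0 < q" "q < 1" "v = q^2/2"
    unfolding q_def using assms by auto
  have "(1 + a^2/2)^2 = a^2 + 1 + (a^2)^2/4"
    by (simp add: power2_eq_square field_simps)
  then have "sqrt (a^2 + 1) \<le> sqrt ((1 + a^2/2)^2)"
    by (intro real_sqrt_le_mono) simp
  then have "sqrt (a^2 + 1) \<le> 1 + a^2/2"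
    by simp
  then have "v * (a - a^2/2) \<le> profit v a v"
    unfolding profit_def using assms by (intro mult_left_mono) auto
  also have "\<dots> \<le> PiS v a"
    using profit_le_PiS[of a v v] assms \<open>0 < q\<close> unfolding a_def by simp
  finally have "q^3 * (3/10 - 9/100 * q) \<le> PiS v a"
    unfolding a_def \<open>v = q^2/2\<close> by (simp add: field_simps power2_eq_square power3_eq_cube)
  moreover have "q^3 * (21/100) \<le> q^3 * (3/10 - 9/100 * q)"
    using \<open>0 < q\<close> \<open>q < 1\<close> by (intro mult_left_mono) auto
  moreover have "(2 * v/3) powr (3/2) \<le> q^3 * (21/100)"
  proof -
    have "17/10 \<le> sqrt (3::real)"
      by (rule real_le_rsqrt) (simp add: power2_eq_square)
    have "(2 * v/3) powr (3/2) = q^3 / (3 * sqrt 3)"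
      using \<open>0 < q\<close> unfolding \<open>v = q^2/2\<close>
    by (simp add: powr_three_halves real_sqrt_divide power3_eq_cube power2_eq_square)
    also have "\<dots> \<le> q^3 / (3 * (17/10))"
      using \<open>0 < q\<close> \<open>17/10 \<le> sqrt 3\<close> by (intro divide_left_mono) auto
    also have "\<dots> \<le> q^3 * (21/100)"
      using \<open>0 < q\<close> by simp
    finally show ?thesis .
  qed
  ultimately show ?thesis
    unfolding a_def q_def by linarith
qed

lemma alphaS_le:
  assumes "0 < v" "v < 1/2"
  shows "alphaS v \<le> 3/5 * sqrt (2 * v)"
  unfolding alphaS_def
  by (rule cInf_lower) (use PiS_three_fifths_ge[OF assms] assms in \<open>auto intro: bdd_belowI\<close>)

lemma alphaS_less_alphaA:
  assumes "0 < v" "v < 1/2"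
  shows "alphaS v < alphaA v"
proof -
  have "0 < sqrt (2 * v)"
    using assms by simp
  then show ?thesis
    using alphaS_le[OF assms] unfolding alphaA_def by linarith
qed

lemma le_alphaS:
  assumes "0 < v" "v < 1/2"
    and "\<And>\<alpha>. 0 \<le> \<alpha> \<Longrightarrow> \<alpha> \<le> c \<Longrightarrow> PiS v \<alpha> < (2 * v/3) powr (3/2)"
  shows "c \<le> alphaS v"
  unfolding alphaS_def
proof (rule cInf_greatest)
  have "3/5 * sqrt (2 * v) \<in> {\<alpha>. 0 \<le> \<alpha> \<and> (2 * v/3) powr (3/2) \<le> PiS v \<alpha>}"
    using PiS_three_fifths_ge[OF assms(1,2)] assms(1) by simp
  then show "{\<alpha>. 0 \<le> \<alpha> \<and> (2 * v/3) powr (3/2) \<le> PiS v \<alpha>} \<noteq> {}"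
    by blast
  show "c \<le> \<alpha>" if "\<alpha> \<in> {\<alpha>. 0 \<le> \<alpha> \<and> (2 * v/3) powr (3/2) \<le> PiS v \<alpha>}" for \<alpha>
    using that assms(3)[of \<alpha>] by force
qed

lemma Wfull_le_quadratic_bound:
  assumes "0 \<le> y" "3 * \<alpha> < 4 * Y"
  shows "Wfull v \<alpha> y \<le> Wfull v \<alpha> Y + 3 * (v + \<alpha> * Y - Y^2)^2 / (2 * (4 * Y - 3 * \<alpha>))"
proof -
  define a where "a = v + \<alpha> * Y - Y^2"
  define K where "K = (4 * Y - 3 * \<alpha>) / 3"
  have "Wfull v \<alpha> y = Wfull v \<alpha> Y + (a * (y - Y) - K * (y - Y)^2/2) - (y - Y)^2 * y/3"
    unfolding Wfull_def a_def K_def by (simp add: field_simps power2_eq_square power3_eq_cube)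
  moreover have "a * (y - Y) - K * (y - Y)^2/2 \<le> a^2 / (2 * K)"
    using linear_minus_square_le[of K a "y - Y"] assms(2) unfolding K_def by simp
  moreover have "0 \<le> (y - Y)^2 * y/3"
    using assms(1) by simp
  ultimately show ?thesis
    unfolding a_def K_def by (simp add: field_simps)
qed

lemma Wfull_minus_U_primitive_1:
  "Wfull v \<alpha> 1 - U_primitive v \<alpha> 1 (1 - m) = m * (\<alpha> + v) - (1 + \<alpha>) * m^2/2 + m^3/6"
  by (simp add: Wfull_def U_primitive_def power2_eq_square power3_eq_cube field_simps)

lemma welfare_gap_pos:
  assumes "0 \<le> c" "0 < v" "v < 1/2" "m \<le> 1" "3 * c < 4 * Y"
    and "0 < 2 * (4 * Y - 3 * c) * (Wfull v c 1 - U_primitive v c 1 (1 - m) - Wfull v c Y)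
              - 3 * (v + c * Y - Y^2)^2"
  shows "0 < welfare_gap v c"
proof -
  have "0 \<le> yP v c"
    using alpha_less_yP[OF assms(1,2)] assms(1) by linarith
  have "Wfull v c (yP v c) \<le> Wfull v c Y + 3 * (v + c * Y - Y^2)^2 / (2 * (4 * Y - 3 * c))"
    using Wfull_le_quadratic_bound[OF \<open>0 \<le> yP v c\<close> assms(5)] .
  also have "\<dots> < Wfull v c 1 - U_primitive v c 1 (1 - m)"
    using assms(5,6) by (simp add: field_simps)
  also have "\<dots> \<le> Wcut v c 1"
    using Wcut_1_ge[OF assms(1,3)] assms(4) by simp
  finally show ?thesis
    unfolding welfare_gap_def by simp
qed

fun bernstein_form :: "real \<Rightarrow> real list \<Rightarrow> real \<Rightarrow> real" where
  "bernstein_form b [] r = 0"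
| "bernstein_form b (c # cs) r = c * (b - r)^length cs + r * bernstein_form b cs r"

lemmas bernstein_form_unfold =
  bernstein_form.simps list.size(3) length_Cons power_Suc power_0 mult_1_right mult_zero_right add_0_right

lemma bernstein_form_pos:
  assumes "0 < r" "r < b" "cs \<noteq> []" "\<forall>c\<in>set cs. 0 < c"
  shows "0 < bernstein_form b cs r"
  using assms(3,4)
proof (induction cs)
  case Nil
  then show ?case
    by simp
next
  case (Cons c cs)
  have "0 \<le> bernstein_form b cs r"
    using Cons by (cases "cs = []") auto
  then show ?case
    using Cons.prems assms(1,2) by (simp add: add_pos_nonneg)
qed

lemma r_less_19_25:
  assumes "0 < r" "3 * r^4 < (1::real)"
  shows "r < 19/25"
proof (rule ccontr)
  assume "\<not> r < 19/25"
  then have "(19/25::real)^4 \<le> r^4"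
    by (intro power_mono) auto
  then show False
    using assms(2) by (simp add: power_divide)
qed

text \<open>Each positivity fact below is certified by writing the polynomial as a positive factor times a
  combination, with positive coefficients, of \<open>r\<^sup>i (19/25 - r)\<^sup>n\<^sup>-\<^sup>i\<close>; and \<open>3 r\<^sup>4 < 1\<close> forces \<open>r < 19/25\<close>.\<close>

lemma positive_by_bernstein:
  assumes "e = q * bernstein_form (19/25) cs r" "0 < q" "0 < r" "3 * r^4 < 1"
    "cs \<noteq> []" "\<forall>c\<in>set cs. 0 < c"
  shows "0 < e"
  using bernstein_form_pos[OF assms(3) r_less_19_25[OF assms(3,4)] assms(5,6)] assms(1,2) by simp

text \<open>Polynomials in \<open>r = (2v/3)\<^sup>1\<^sup>/\<^sup>4\<close>, so that \<open>v = 3r\<^sup>4/2\<close> and \<open>(2v/3)\<^sup>3\<^sup>/\<^sup>2 = r\<^sup>6\<close>: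
  a level \<open>sep_alpha\<close> separating the two thresholds, and approximate optimisers at that level used
  to test it, namely the market share maximising the subscription profit, the mass \<open>1 - x\<^sup>A(1)\<close>
  of participants at \<open>y = 1\<close>, and \<open>yP\<close>.\<close>

definition sep_alpha :: "real \<Rightarrow> real" where
  "sep_alpha r = 1/2 + (3 * r^4 - 1) * (1/2 - 9/5 * r^3 + 3 * r^4 - 3/2 * r^5)"

definition sep_share :: "real \<Rightarrow> real" where
  "sep_share r = 1 - r^2 + (3 * r^4 - 1) * (1 - r^2 - 4/5 * r^3 + 2 * r^4)"

definition sep_mass :: "real \<Rightarrow> real" where
  "sep_mass r = 1 + (3 * r^4 - 1) * (1 - 7/4 * r^3 + 7/3 * r^4)"

definition sep_y :: "real \<Rightarrow> real" where
  "sep_y r = 1 + (3 * r^4 - 1) * (1 - 27/20 * r^2 + 3/5 * r^3)"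

lemma sep_alpha_pos:
  assumes "0 < r" "3 * r^4 < 1"
  shows "0 < sep_alpha r"
proof (rule positive_by_bernstein)
  show "sep_alpha r = r^3 * bernstein_form (19/25)
      [439453125/47045881, 4716796875/94091762, 5411718750/47045881, 6851953125/47045881,
      4637901000/47045881, 3537332925/94091762, 556477371/94091762] r"
    unfolding sep_alpha_def by (simp only: bernstein_form_unfold) algebra
qed (use assms in simp_all)

lemma sep_alpha_sq_margin:
  assumes "0 < r" "3 * r^4 < 1"
  shows "0 < 3/4 * r^4 - (sep_alpha r)^2"
proof (rule positive_by_bernstein)
  show "3/4 * r^4 - (sep_alpha r)^2 = (r^4 * (1 - 3 * r^4)) * bernstein_form (19/25)
      [286102294921875/24524265031204, 1430511474609375/12262132515602,
      12160711669921875/24524265031204, 7381351318359375/6131066257801,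
      22867558154296875/12262132515602, 23710589560546875/12262132515602,
      34175041962609375/24524265031204, 4249407285365625/6131066257801,
      5617713923956125/24524265031204, 273981646903800/6131066257801,
      92015701785327/24524265031204] r"
    unfolding sep_alpha_def by (simp only: bernstein_form_unfold) algebra
qed (use assms in simp_all)

lemma sep_share_margin:
  assumes "0 < r" "3 * r^4 < 1"
  shows "0 < 1 + 2 * sep_alpha r - 2 * sep_share r"
proof (rule positive_by_bernstein)
  show "1 + 2 * sep_alpha r - 2 * sep_share r = 1 * bernstein_form (19/25)
      [3814697265625/322687697779, 34332275390625/322687697779, 137329101562500/322687697779,
      323783691406250/322687697779, 494383251953125/322687697779,
      501973700000000/322687697779, 339800956812500/322687697779,
      151222323291250/322687697779, 43292216069900/322687697779, 4404044295514/322687697779] r"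
    unfolding sep_alpha_def sep_share_def by (simp only: bernstein_form_unfold) algebra
qed (use assms in simp_all)

lemma sep_profit_certificate:
  assumes "0 < r" "3 * r^4 < 1"
  shows "0 < 2 * (1 + 2 * sep_alpha r - 2 * sep_share r) * (r^6 - profit_share (3/2 * r^4) (sep_alpha r) (sep_share r)) - (profit_share' (3/2 * r^4) (sep_alpha r) (sep_share r))^2"
proof (rule positive_by_bernstein)
  show "2 * (1 + 2 * sep_alpha r - 2 * sep_share r) * (r^6 - profit_share (3/2 * r^4) (sep_alpha r) (sep_share r)) - (profit_share' (3/2 * r^4) (sep_alpha r) (sep_share r))^2 = (r^6 * (1 - 3 * r^4)) * bernstein_form (19/25)
      [2046363078989088535308837890625/13569980418174090907801371961,
      46748027671128511428833007812500/13569980418174090907801371961,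
      492582330480217933654785156250000/13569980418174090907801371961,
      3198835634975694119930267333984375/13569980418174090907801371961,
      3034741161973215639591217041015625/2856837982773492822695025676,
      5062621443229727447032928466796875/1428418991386746411347512838,
      26065437084364928305149078369140625/2856837982773492822695025676,
      26660168874033592641353607177734375/1428418991386746411347512838,
      88721604383313135802745819091796875/2856837982773492822695025676,
      30626098900035293900966644287109375/714209495693373205673756419,
      71383427663053608477878570556640625/1428418991386746411347512838,
      35528588765776589305305480957031250/714209495693373205673756419,
      121256687572455839550083160400390625/2856837982773492822695025676,
      44022982088282450593657562255859375/1428418991386746411347512838,
      53486346424575634143327787353515625/2856837982773492822695025676,
      13268786613146690844260492724609375/1428418991386746411347512838,
      10445249610340001342862321806640625/2856837982773492822695025676,
      787845233528945307407675567812500/714209495693373205673756419,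
      175207980387780893215731426416875/714209495693373205673756419,
      524039728614712975447955591048250/13569980418174090907801371961,
      115974038668853901954353616002225/27139960836348181815602743922,
      4643993013835632977578581013020/13569980418174090907801371961,
      223942085823594442840937616008/13569980418174090907801371961] r"
    unfolding sep_alpha_def sep_share_def profit_share_def profit_share'_def
    by (simp only: bernstein_form_unfold) algebra
qed (use assms in simp_all)

lemma sep_mass_margin:
  assumes "0 < r" "3 * r^4 < 1"
  shows "0 < 1 - sep_mass r"
proof (rule positive_by_bernstein)
  show "1 - sep_mass r = (1 - 3 * r^4) * bernstein_form (19/25)
      [390625/130321, 1562500/130321, 2343750/130321, 5049675/521284, 4735513/1563852] r"
    unfolding sep_mass_def by (simp only: bernstein_form_unfold) algebra
qed (use assms in simp_all)

lemma sep_y_margin: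
  assumes "0 < r" "3 * r^4 < 1"
  shows "0 < 4 * sep_y r - 3 * sep_alpha r"
proof (rule positive_by_bernstein)
  show "4 * sep_y r - 3 * sep_alpha r = r^2 * bernstein_form (19/25)
      [32958984375/893871739, 194531250000/893871739, 1066435546875/1787743478,
      889627734375/893871739, 930406246875/893871739, 596012938500/893871739,
      395895692775/1787743478, 52852393353/1787743478] r"
    unfolding sep_alpha_def sep_y_def by (simp only: bernstein_form_unfold) algebra
qed (use assms in simp_all)

lemma sep_welfare_certificate:
  assumes "0 < r" "3 * r^4 < 1"
  shows "0 < 2 * (4 * sep_y r - 3 * sep_alpha r) * (Wfull (3/2 * r^4) (sep_alpha r) 1 - U_primitive (3/2 * r^4) (sep_alpha r) 1 (1 - sep_mass r) - Wfull (3/2 * r^4) (sep_alpha r) (sep_y r)) - 3 * ((3/2 * r^4) + sep_alpha r * sep_y r - (sep_y r)^2)^2"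
proof (rule positive_by_bernstein)
  show "2 * (4 * sep_y r - 3 * sep_alpha r) * (Wfull (3/2 * r^4) (sep_alpha r) 1 - U_primitive (3/2 * r^4) (sep_alpha r) 1 (1 - sep_mass r) - Wfull (3/2 * r^4) (sep_alpha r) (sep_y r)) - 3 * ((3/2 * r^4) + sep_alpha r * sep_y r - (sep_y r)^2)^2 = (r^8 * (1 - 3 * r^4)^2) * bernstein_form (19/25)
      [15489128418266773223876953125/26656601676265277832407296,
      113830287940800189971923828125/13328300838132638916203648,
      1591443606205284595489501953125/26656601676265277832407296,
      5311184393449127674102783203125/19992451257198958374305472,
      33907908937312662601470947265625/39984902514397916748610944,
      82765713120412628650665283203125/39984902514397916748610944,
      160205672025109192180633544921875/39984902514397916748610944,
      564031046724793659008026123046875/89966030657395312684374624,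
      1916838000535274227862701416015625/239909415086387500491665664,
      2984188633301783109222430419921875/359864122629581250737498496,
      1673956797661884481224966552734375/239909415086387500491665664,
      35409709924923135298417392578125/7497169221449609390364552,
      152581942696571457267452744921875/59977353771596875122916416,
      128716480947579889691363611328125/119954707543193750245832832,
      41615712513514432250846304734375/119954707543193750245832832,
      5011594526143644646310225640625/59977353771596875122916416,
      1301612222275005397255229478625/89966030657395312684374624,
      33836556832396797293668580725/19992451257198958374305472,
      19442067293725952609847958051/179932061314790625368749248] r"
    unfolding Wfull_minus_U_primitive_1 unfolding Wfull_def sep_alpha_def sep_mass_def sep_y_def
    by (simp only: bernstein_form_unfold) algebra
qed (use assms in simp_all)

lemma fourth_root_param:
  fixes v :: real
  assumes "0 < v"
  defines "r \<equiv> sqrt (sqrt (2 * v/3))"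
  shows "0 < r" "v = 3/2 * r^4" "(2 * v/3) powr (3/2) = r^6"
proof -
  show "0 < r"
    unfolding r_def using assms by simp
  have r4: "r^4 = (r^2)^2"
    by (simp flip: power_mult)
  have "r^2 = sqrt (2 * v/3)"
    unfolding r_def using assms by simp
  then have "r^4 = 2 * v/3"
    unfolding r4 using assms by simp
  then show "v = 3/2 * r^4"
    by simp
  have "sqrt (r^4) = r^2"
    using r4 by (intro real_sqrt_unique) simp_all
  then have "(2 * v/3) powr (3/2) = r^4 * r^2"
    using powr_three_halves[of "2 * v/3"] assms unfolding \<open>r^4 = 2 * v/3\<close>[symmetric] by simp
  also have "\<dots> = r^6"
    by (simp flip: power_add)
  finally show "(2 * v/3) powr (3/2) = r^6" .
qed

lemma separating_level:
  assumes "0 < v" "v < 1/2"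
  obtains c where "0 < c" "c < sqrt (v/2)" "0 < welfare_gap v c"
    "\<And>\<alpha>. 0 \<le> \<alpha> \<Longrightarrow> \<alpha> \<le> c \<Longrightarrow> PiS v \<alpha> < (2 * v/3) powr (3/2)"
proof
  define r where "r = sqrt (sqrt (2 * v/3))"
  have "0 < r" and v: "v = 3/2 * r^4" and "(2 * v/3) powr (3/2) = r^6"
    using fourth_root_param[OF assms(1)] unfolding r_def by auto
  then have r: "0 < r" "3 * r^4 < 1"
    using assms(2) by auto
  show "0 < sep_alpha r"
    using sep_alpha_pos[OF r] .
  have "(sep_alpha r)^2 < v/2"
    using sep_alpha_sq_margin[OF r] v by simp
  then show "sep_alpha r < sqrt (v/2)"
    by (rule real_less_rsqrt)
  show "0 < welfare_gap v (sep_alpha r)"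
  proof (rule welfare_gap_pos[OF _ assms, where m = "sep_mass r" and Y = "sep_y r"])
    show "0 \<le> sep_alpha r"
      using sep_alpha_pos[OF r] by simp
    show "sep_mass r \<le> 1"
      using sep_mass_margin[OF r] by simp
    show "3 * sep_alpha r < 4 * sep_y r"
      using sep_y_margin[OF r] by simp
    show "0 < 2 * (4 * sep_y r - 3 * sep_alpha r) * (Wfull v (sep_alpha r) 1
              - U_primitive v (sep_alpha r) 1 (1 - sep_mass r) - Wfull v (sep_alpha r) (sep_y r))
            - 3 * (v + sep_alpha r * sep_y r - (sep_y r)^2)^2"
      unfolding v by (rule sep_welfare_certificate[OF r])
  qed
  show "PiS v \<alpha> < (2 * v/3) powr (3/2)" if "0 \<le> \<alpha>" "\<alpha> \<le> sep_alpha r" for \<alpha>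
  proof -
    have "PiS v \<alpha> < r^6"
      using PiS_less[OF that _ sep_share_margin[OF r] sep_profit_certificate[OF r]] assms
      unfolding v by simp
    then show ?thesis
      using \<open>(2 * v/3) powr (3/2) = r^6\<close> by simp
  qed
qed

theorem proposition7:
  fixes v :: real
  assumes "0 < v" and "v < 1/2"
  shows "\<exists>\<alpha>P::real.
           (\<forall>\<alpha>\<in>{0..1}. \<alpha> < \<alpha>P \<longrightarrow> planner_solves v \<alpha> (yP v \<alpha>)) \<and>
           (\<forall>\<alpha>\<in>{0..1}. \<alpha> > \<alpha>P \<longrightarrow> planner_solves v \<alpha> 1) \<and>
           \<alpha>P < alphaS v \<and> alphaS v < alphaA v \<and>
           (\<forall>\<alpha>\<in>{0..1}. \<alpha> < \<alpha>P \<longrightarrow> yS v < yP v \<alpha> \<and> yP v \<alpha> < yA v)"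
proof -
  obtain c where c: "0 < c" "c < sqrt (v/2)" "0 < welfare_gap v c"
    and PiS_small: "\<And>\<alpha>. 0 \<le> \<alpha> \<Longrightarrow> \<alpha> \<le> c \<Longrightarrow> PiS v \<alpha> < (2 * v/3) powr (3/2)"
    using separating_level[OF assms] by blast
  obtain \<alpha>P where "\<alpha>P < c"
    and moderate: "\<And>\<alpha>. 0 \<le> \<alpha> \<Longrightarrow> \<alpha> < \<alpha>P \<Longrightarrow> planner_solves v \<alpha> (yP v \<alpha>)"
    and no_moderation: "\<And>\<alpha>. 0 \<le> \<alpha> \<Longrightarrow> \<alpha>P < \<alpha> \<Longrightarrow> planner_solves v \<alpha> 1"
    using planner_threshold[OF assms c] by blast
  have "\<alpha>P < alphaS v"
    using \<open>\<alpha>P < c\<close> le_alphaS[OF assms, of c] PiS_small by fastforce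
  moreover have "yS v < yP v \<alpha> \<and> yP v \<alpha> < yA v" if "0 \<le> \<alpha>" "\<alpha> < \<alpha>P" for \<alpha>
    using yS_less_yP[OF that(1) assms(1)] yP_less_yA[OF that(1) assms(1)] that \<open>\<alpha>P < c\<close> c(2) by simp
  ultimately show ?thesis
    using moderate no_moderation alphaS_less_alphaA[OF assms] by (intro exI[of _ \<alpha>P]) auto
qed

end
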